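(* If $\mathcal{A}$ is a unital separable $\mathbf{matrix}$-tracially stable $C^*$-algebra, then $\mathrm{AT}(\mathcal{A})=\mathrm{AT}_{\mathrm{LFD}}(\mathcal{A})$.
   Context: Fix a free ultrafilter $\mathcal{U}$ on $\mathbb{N}$. For unital $C^*$-algebras $\mathcal{A}_k$ with tracial states $\tau_k$, the tracial ultraproduct $(\mathcal{A}_k,\tau_k)^\mathcal{U}$ is the quotient of the bounded sequences in $\prod_k\mathcal{A}_k$ by those with $\lim_{k\to\mathcal{U}}\tau_k(a_k^*a_k)=0$; $(a_k)_\mathcal{U}$ is the class of $(a_k)$. A unital $*$-homomorphism $\pi:\mathcal{A}\to(\mathcal{A}_k,\tau_k)^\mathcal{U}$ is approximately liftable if there are $E\in\mathcal{U}$ and unital $*$-homomorphisms $\pi_k:\mathcal{A}\to\mathcal{A}_k$ ($k\in E$) with $\pi(a)=(\pi_k(a))_\mathcal{U}$ for all $a$ ($\pi_k=0$ for $k\notin E$). $\mathcal{A}$ is $\mathbf{matrix}$-tracially stable if every unital $*$-homomorphism $\mathcal{A}\to(\mathcal{A}_k,\tau_k)^\mathcal{U}$ with each $\mathcal{A}_k$ a full matrix algebra $\mathbb{M}_{n}(\mathbb{C})$ and $\tau_k$ a tracial state is approximately liftable. $\mathrm{tr}_n$ is the normalized trace on $\mathbb{M}_n$, $\|x\|_{2,\mathrm{tr}_n}=\sqrt{\mathrm{tr}_n(x^*x)}$. A tracial state $\tau$ on $\mathcal{A}$ is amenable if there are unital completely positive maps $\varphi_k:\mathcal{A}\to\mathbb{M}_{n(k)}$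 with $\lim_k\|\varphi_k(ab)-\varphi_k(a)\varphi_k(b)\|_{2,\mathrm{tr}_{n(k)}}=0$ and $\tau(a)=\lim_k\mathrm{tr}_{n(k)}(\varphi_k(a))$ for all $a,b$; $\mathrm{AT}(\mathcal{A})$ is the set of amenable traces. A tracial state $\tau$ is locally finite dimensional if there are unital completely positive maps $\varphi_k:\mathcal{A}\to\mathbb{M}_{n(k)}$ with $\mathrm{tr}_{n(k)}\circ\varphi_k\to\tau$ weak-$*$ and $\lim_k d(a,\mathcal{A}_{\varphi_k})=0$ for every $a\in\mathcal{A}$, where $\mathcal{A}_{\varphi_k}$ is the multiplicative domain of $\varphi_k$ and $d(a,\mathcal{A}_{\varphi_k})=\inf_{b\in\mathcal{A}_{\varphi_k}}\|a-b\|$; $\mathrm{AT}_{\mathrm{LFD}}(\mathcal{A})$ is the set of such traces. *)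

theory Defs
  imports "HOL-Analysis.Analysis" "Jordan_Normal_Form.Matrix"
begin

text \<open>A unital C*-algebra is modelled as a Banach algebra type 'a with unit
(class real_normed_algebra_1, banach) together with a complex scalar
multiplication sc extending the real one and an involution st satisfying
the C*-identity.\<close>

definition cstar_algebra ::
  "(complex \<Rightarrow> 'a::{real_normed_algebra_1,banach} \<Rightarrow> 'a) \<Rightarrow> ('a \<Rightarrow> 'a) \<Rightarrow> bool" where
  "cstar_algebra sc st \<longleftrightarrow>
     (\<forall>r a. sc (complex_of_real r) a = r *\<^sub>R a) \<and>
     (\<forall>c d a. sc (c * d) a = sc c (sc d a)) \<and>
     (\<forall>c d a. sc (c + d) a = sc c a + sc d a) \<and>
     (\<forall>c a b. sc c (a + b) = sc c a + sc c b) \<and>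
     (\<forall>c a b. sc c (a * b) = sc c a * b) \<and>
     (\<forall>c a b. sc c (a * b) = a * sc c b) \<and>
     (\<forall>c a. norm (sc c a) = cmod c * norm a) \<and>
     (\<forall>a. st (st a) = a) \<and>
     (\<forall>a b. st (a + b) = st a + st b) \<and>
     (\<forall>c a. st (sc c a) = sc (cnj c) (st a)) \<and>
     (\<forall>a b. st (a * b) = st b * st a) \<and>
     (\<forall>a. norm (st a * a) = (norm a)\<^sup>2)"

definition separable_alg :: "'a::metric_space itself \<Rightarrow> bool" where
  "separable_alg _ \<longleftrightarrow> (\<exists>D::'a set. countable D \<and> closure D = UNIV)"

definition adj :: "complex mat \<Rightarrow> complex mat" where
  "adj x = mat (dim_col x) (dim_row x) (\<lambda>(i,j). cnj (x $$ (j,i)))"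

definition ntr :: "complex mat \<Rightarrow> complex" where
  "ntr x = (\<Sum>i<dim_row x. x $$ (i,i)) / of_nat (dim_row x)"

definition norm2_tr :: "complex mat \<Rightarrow> real" where
  "norm2_tr x = sqrt (Re (ntr (adj x * x)))"

definition opnorm_mat :: "complex mat \<Rightarrow> real" where
  "opnorm_mat x = Sup {sqrt (\<Sum>i<dim_row x. (cmod (\<Sum>j<dim_col x. x $$ (i,j) * v j))\<^sup>2) | v.
                        (\<Sum>j<dim_col x. (cmod (v j))\<^sup>2) \<le> 1}"

definition pos_mat :: "complex mat \<Rightarrow> bool" where
  "pos_mat x \<longleftrightarrow> (\<exists>b \<in> carrier_mat (dim_row x) (dim_row x). x = adj b * b)"

definition pos_amp :: "('a::real_normed_algebra_1 \<Rightarrow> 'a) \<Rightarrow> nat \<Rightarrow> (nat \<Rightarrow> nat \<Rightarrow> 'a) \<Rightarrow> bool" where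
  "pos_amp st k X \<longleftrightarrow> (\<exists>B. \<forall>i<k. \<forall>j<k. X i j = (\<Sum>l<k. st (B l i) * B l j))"

definition amp :: "nat \<Rightarrow> ('a \<Rightarrow> complex mat) \<Rightarrow> nat \<Rightarrow> (nat \<Rightarrow> nat \<Rightarrow> 'a) \<Rightarrow> complex mat" where
  "amp n \<phi> k X = mat (k * n) (k * n) (\<lambda>(r,s). \<phi> (X (r div n) (s div n)) $$ (r mod n, s mod n))"

definition complex_linear_into ::
  "(complex \<Rightarrow> 'a::real_normed_algebra_1 \<Rightarrow> 'a) \<Rightarrow> nat \<Rightarrow> ('a \<Rightarrow> complex mat) \<Rightarrow> bool" where
  "complex_linear_into sc n \<phi> \<longleftrightarrow>
     (\<forall>a. \<phi> a \<in> carrier_mat n n) \<and>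
     (\<forall>a b. \<phi> (a + b) = \<phi> a + \<phi> b) \<and>
     (\<forall>c a. \<phi> (sc c a) = c \<cdot>\<^sub>m \<phi> a)"

definition ucp ::
  "(complex \<Rightarrow> 'a::real_normed_algebra_1 \<Rightarrow> 'a) \<Rightarrow> ('a \<Rightarrow> 'a) \<Rightarrow> nat \<Rightarrow> ('a \<Rightarrow> complex mat) \<Rightarrow> bool" where
  "ucp sc st n \<phi> \<longleftrightarrow> complex_linear_into sc n \<phi> \<and> \<phi> 1 = 1\<^sub>m n \<and>
     (\<forall>k X. pos_amp st k X \<longrightarrow> pos_mat (amp n \<phi> k X))"

definition ustar_hom ::
  "(complex \<Rightarrow> 'a::real_normed_algebra_1 \<Rightarrow> 'a) \<Rightarrow> ('a \<Rightarrow> 'a) \<Rightarrow> nat \<Rightarrow> ('a \<Rightarrow> complex mat) \<Rightarrow> bool" where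
  "ustar_hom sc st n \<pi> \<longleftrightarrow> complex_linear_into sc n \<pi> \<and> \<pi> 1 = 1\<^sub>m n \<and>
     (\<forall>a b. \<pi> (a * b) = \<pi> a * \<pi> b) \<and> (\<forall>a. \<pi> (st a) = adj (\<pi> a))"

definition mult_domain :: "('a::real_normed_algebra_1 \<Rightarrow> complex mat) \<Rightarrow> 'a set" where
  "mult_domain \<phi> = {a. \<forall>b. \<phi> (a * b) = \<phi> a * \<phi> b \<and> \<phi> (b * a) = \<phi> b * \<phi> a}"

definition tracial_state ::
  "(complex \<Rightarrow> 'a::real_normed_algebra_1 \<Rightarrow> 'a) \<Rightarrow> ('a \<Rightarrow> 'a) \<Rightarrow> ('a \<Rightarrow> complex) \<Rightarrow> bool" where
  "tracial_state sc st \<tau> \<longleftrightarrow>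
     (\<forall>a b. \<tau> (a + b) = \<tau> a + \<tau> b) \<and> (\<forall>c a. \<tau> (sc c a) = c * \<tau> a) \<and>
     (\<forall>a. Im (\<tau> (st a * a)) = 0 \<and> Re (\<tau> (st a * a)) \<ge> 0) \<and>
     \<tau> 1 = 1 \<and> (\<forall>a b. \<tau> (a * b) = \<tau> (b * a))"

definition AT ::
  "(complex \<Rightarrow> 'a::real_normed_algebra_1 \<Rightarrow> 'a) \<Rightarrow> ('a \<Rightarrow> 'a) \<Rightarrow> ('a \<Rightarrow> complex) set" where
  "AT sc st = {\<tau>. tracial_state sc st \<tau> \<and>
     (\<exists>(n::nat \<Rightarrow> nat) (\<phi>::nat \<Rightarrow> 'a \<Rightarrow> complex mat).
        (\<forall>k. n k \<ge> 1 \<and> ucp sc st (n k) (\<phi> k)) \<and>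
        (\<forall>a b. (\<lambda>k. norm2_tr (\<phi> k (a * b) - \<phi> k a * \<phi> k b)) \<longlonglongrightarrow> 0) \<and>
        (\<forall>a. (\<lambda>k. ntr (\<phi> k a)) \<longlonglongrightarrow> \<tau> a))}"

definition AT_LFD ::
  "(complex \<Rightarrow> 'a::{real_normed_algebra_1} \<Rightarrow> 'a) \<Rightarrow> ('a \<Rightarrow> 'a) \<Rightarrow> ('a \<Rightarrow> complex) set" where
  "AT_LFD sc st = {\<tau>. tracial_state sc st \<tau> \<and>
     (\<exists>(n::nat \<Rightarrow> nat) (\<phi>::nat \<Rightarrow> 'a \<Rightarrow> complex mat).
        (\<forall>k. n k \<ge> 1 \<and> ucp sc st (n k) (\<phi> k)) \<and>
        (\<forall>a. (\<lambda>k. ntr (\<phi> k a)) \<longlonglongrightarrow> \<tau> a) \<and>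
        (\<forall>a. (\<lambda>k. infdist a (mult_domain (\<phi> k))) \<longlonglongrightarrow> 0))}"

definition free_ultrafilter :: "nat filter \<Rightarrow> bool" where
  "free_ultrafilter U \<longleftrightarrow> U \<noteq> bot \<and>
     (\<forall>P. eventually P U \<or> eventually (\<lambda>k. \<not> P k) U) \<and>
     (\<forall>m. eventually (\<lambda>k. k \<noteq> m) U)"

definition tracial_state_mat :: "nat \<Rightarrow> (complex mat \<Rightarrow> complex) \<Rightarrow> bool" where
  "tracial_state_mat n t \<longleftrightarrow>
     (\<forall>x\<in>carrier_mat n n. \<forall>y\<in>carrier_mat n n. t (x + y) = t x + t y \<and> t (x * y) = t (y * x)) \<and>
     (\<forall>c. \<forall>x\<in>carrier_mat n n. t (c \<cdot>\<^sub>m x) = c * t x) \<and>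
     (\<forall>x\<in>carrier_mat n n. Im (t (adj x * x)) = 0 \<and> Re (t (adj x * x)) \<ge> 0) \<and>
     t (1\<^sub>m n) = 1"

text \<open>A sequence (x_k) represents 0 in the tracial ultraproduct.\<close>
definition ultra_null :: "nat filter \<Rightarrow> (nat \<Rightarrow> complex mat \<Rightarrow> complex) \<Rightarrow> (nat \<Rightarrow> complex mat) \<Rightarrow> bool" where
  "ultra_null U t x \<longleftrightarrow> ((\<lambda>k. t k (adj (x k) * x k)) \<longlongrightarrow> 0) U"

text \<open>A unital *-homomorphism pi : A -> (M_{n k}, t_k)^U, presented by a choice of
bounded representatives rho a = (rho a k)_k of pi(a); the *-homomorphism
identities hold modulo the null sequences.\<close>
definition ustar_hom_ultra ::
  "(complex \<Rightarrow> 'a::real_normed_algebra_1 \<Rightarrow> 'a) \<Rightarrow> ('a \<Rightarrow> 'a) \<Rightarrow> nat filter \<Rightarrow> (nat \<Rightarrow> nat) \<Rightarrow>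
   (nat \<Rightarrow> complex mat \<Rightarrow> complex) \<Rightarrow> ('a \<Rightarrow> nat \<Rightarrow> complex mat) \<Rightarrow> bool" where
  "ustar_hom_ultra sc st U n t \<rho> \<longleftrightarrow>
     (\<forall>a k. \<rho> a k \<in> carrier_mat (n k) (n k)) \<and>
     (\<forall>a. \<exists>B. \<forall>k. opnorm_mat (\<rho> a k) \<le> B) \<and>
     (\<forall>a b. ultra_null U t (\<lambda>k. \<rho> (a + b) k - (\<rho> a k + \<rho> b k))) \<and>
     (\<forall>c a. ultra_null U t (\<lambda>k. \<rho> (sc c a) k - c \<cdot>\<^sub>m \<rho> a k)) \<and>
     (\<forall>a b. ultra_null U t (\<lambda>k. \<rho> (a * b) k - \<rho> a k * \<rho> b k)) \<and>
     (\<forall>a. ultra_null U t (\<lambda>k. \<rho> (st a) k - adj (\<rho> a k))) \<and>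
     ultra_null U t (\<lambda>k. \<rho> 1 k - 1\<^sub>m (n k))"

definition approx_liftable ::
  "(complex \<Rightarrow> 'a::real_normed_algebra_1 \<Rightarrow> 'a) \<Rightarrow> ('a \<Rightarrow> 'a) \<Rightarrow> nat filter \<Rightarrow> (nat \<Rightarrow> nat) \<Rightarrow>
   (nat \<Rightarrow> complex mat \<Rightarrow> complex) \<Rightarrow> ('a \<Rightarrow> nat \<Rightarrow> complex mat) \<Rightarrow> bool" where
  "approx_liftable sc st U n t \<rho> \<longleftrightarrow>
     (\<exists>E \<pi>. eventually (\<lambda>k. k \<in> E) U \<and>
        (\<forall>k\<in>E. ustar_hom sc st (n k) (\<pi> k)) \<and>
        (\<forall>a. ultra_null U t (\<lambda>k. \<rho> a k - (if k \<in> E then \<pi> k a else 0\<^sub>m (n k) (n k)))))"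

definition matrix_tracially_stable ::
  "nat filter \<Rightarrow> (complex \<Rightarrow> 'a::real_normed_algebra_1 \<Rightarrow> 'a) \<Rightarrow> ('a \<Rightarrow> 'a) \<Rightarrow> bool" where
  "matrix_tracially_stable U sc st \<longleftrightarrow>
     (\<forall>(n::nat \<Rightarrow> nat) t \<rho>. (\<forall>k. n k \<ge> 1 \<and> tracial_state_mat (n k) (t k)) \<longrightarrow>
        ustar_hom_ultra sc st U n t \<rho> \<longrightarrow> approx_liftable sc st U n t \<rho>)"

end

theory Submission
  imports Defs "HOL-Computational_Algebra.Formal_Power_Series"
begin

text \<open>
  An amenable trace \<open>\<tau>\<close> comes with unital completely positive maps \<open>\<phi>\<^sub>k\<close> into matrix algebras
  that are asymptotically multiplicative in the normalized 2-norm, so \<open>a \<mapsto> (\<phi>\<^sub>k a)\<^sub>k\<close> is a unital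
  *-homomorphism into the tracial ultraproduct of the matrix algebras with their normalized traces.
  Matrix-tracial stability lifts it to *-homomorphisms \<open>\<pi>\<^sub>k\<close>, whose normalized traces converge to
  \<open>\<tau>\<close> along the ultrafilter. These functionals are 1-Lipschitz, so by separability a diagonal
  argument yields an ordinary subsequence converging pointwise to \<open>\<tau>\<close>; and the multiplicative
  domain of a *-homomorphism is the whole algebra, so \<open>\<tau>\<close> is locally finite dimensional.

  Conversely, if \<open>a\<close> lies within \<open>\<epsilon>\<close> of the multiplicative domain of a ucp map \<open>\<phi>\<close>, then
  \<open>\<parallel>\<phi>(ab) - \<phi>(a)\<phi>(b)\<parallel>\<^sub>2 \<le> 2\<epsilon>\<parallel>b\<parallel>\<close>, so locally finite dimensional traces are amenable.

  The norm estimates rest on the contractivity of ucp maps, which follows from the positivity of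
  \<open>\<phi>\<close> on the matrix \<open>[[1, a], [a\<^sup>*, a\<^sup>*a]]\<close> and the existence of a square root of \<open>r - a\<^sup>*a\<close>
  for \<open>r > \<parallel>a\<parallel>\<^sup>2\<close>.
\<close>

section \<open>Square roots in C*-algebras\<close>

lemma abs_gbinomial_half_le_1: "\<bar>(1/2::real) gchoose k\<bar> \<le> 1"
proof (induction k)
  case 0
  then show ?case by simp
next
  case (Suc k)
  have rec: "real (Suc k) * ((1/2::real) gchoose Suc k) = (1/2 - real k) * ((1/2) gchoose k)"
    using gbinomial_mult_1[of "1/2::real" k] by (simp add: algebra_simps)
  have "\<bar>(1/2 - real k) * ((1/2::real) gchoose k)\<bar> \<le> real (Suc k) * 1"
    unfolding abs_mult using Suc.IH by (intro mult_mono) auto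
  then have "real (Suc k) * \<bar>(1/2::real) gchoose Suc k\<bar> \<le> real (Suc k) * 1"
    using rec by (metis abs_mult abs_of_nat)
  then show ?case by (simp del: of_nat_Suc)
qed

lemma gbinomial_half_convolution:
  "(\<Sum>i\<le>k. ((1/2::real) gchoose i) * (-1) ^ i * (((1/2) gchoose (k - i)) * (-1) ^ (k - i)))
     = (if k = 0 then 1 else if k = 1 then -1 else 0)"
proof -
  have one: "((1::real) gchoose k) = of_nat (1 choose k)"
    by (metis binomial_gbinomial of_nat_1)
  have "(\<Sum>i\<le>k. ((1/2::real) gchoose i) * (-1) ^ i * (((1/2) gchoose (k - i)) * (-1) ^ (k - i)))
      = (-1) ^ k * (\<Sum>i\<le>k. ((1/2::real) gchoose i) * ((1/2) gchoose (k - i)))"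
    unfolding sum_distrib_left by (intro sum.cong) (simp_all add: power_add[symmetric] mult_ac)
  also have "\<dots> = (-1) ^ k * of_nat (1 choose k)"
    using gbinomial_Vandermonde[of "1/2::real" "1/2" k] one by (simp add: atMost_atLeast0)
  finally show ?thesis
    by (cases k) (auto simp: binomial_eq_0)
qed

locale cstar_alg =
  fixes sc :: "complex \<Rightarrow> 'a::{real_normed_algebra_1,banach} \<Rightarrow> 'a" and st :: "'a \<Rightarrow> 'a"
  assumes cstar: "cstar_algebra sc st"
begin

lemma st_add: "st (a + b) = st a + st b"
  using cstar unfolding cstar_algebra_def by blast

lemma st_mult: "st (a * b) = st b * st a"
  using cstar unfolding cstar_algebra_def by blast

lemma st_st [simp]: "st (st a) = a"
  using cstar unfolding cstar_algebra_def by blast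

lemma sc_of_real: "sc (complex_of_real r) a = r *\<^sub>R a"
  using cstar unfolding cstar_algebra_def by simp

lemma st_sc: "st (sc c a) = sc (cnj c) (st a)"
  using cstar unfolding cstar_algebra_def by blast

lemma norm_st_mult_self: "norm (st a * a) = (norm a)\<^sup>2"
  using cstar unfolding cstar_algebra_def by blast

lemma st_0 [simp]: "st 0 = 0"
  using st_add[of 0 0] by simp

lemma st_1 [simp]: "st 1 = 1"
  using st_mult[of "st 1" 1] by simp

lemma st_scaleR: "st (r *\<^sub>R a) = r *\<^sub>R st a"
  using st_sc[of "complex_of_real r" a] by (simp add: sc_of_real)

lemma norm_le_norm_st: "norm a \<le> norm (st a)"
proof (cases "a = 0")
  case False
  have "(norm a)\<^sup>2 \<le> norm (st a) * norm a"
    using norm_st_mult_self[of a] norm_mult_ineq[of "st a" a] by simp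
  then show ?thesis
    using False by (simp add: power2_eq_square)
qed simp

lemma norm_st [simp]: "norm (st a) = norm a"
  using norm_le_norm_st[of a] norm_le_norm_st[of "st a"] by simp

lemma bounded_linear_st: "bounded_linear st"
  by (rule bounded_linear_intro[where K = 1]) (auto simp: st_add st_scaleR)

lemma st_power: "st x = x \<Longrightarrow> st (x ^ k) = x ^ k"
  by (induction k) (auto simp: st_mult power_commutes)

text \<open>The square root of \<open>1 - x\<close> is the binomial series \<open>\<Sum>k. (1/2 gchoose k) (-x)\<^sup>k\<close>.\<close>

lemma selfadjoint_sqrt_one_minus:
  assumes sa: "st x = x" and small: "norm x < 1"
  shows "\<exists>s. st s = s \<and> s * s = 1 - x"
proof -
  define c where "c k = ((1/2::real) gchoose k) * (-1) ^ k" for k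
  define f where "f k = c k *\<^sub>R x ^ k" for k
  have term_bound: "norm (f k) \<le> norm x ^ k" for k
  proof -
    have "norm (f k) = \<bar>c k\<bar> * norm (x ^ k)"
      by (simp add: f_def)
    also have "\<dots> \<le> 1 * norm x ^ k"
      using abs_gbinomial_half_le_1[of k] norm_power_ineq[of x k]
      by (intro mult_mono) (auto simp: c_def abs_mult)
    finally show ?thesis by simp
  qed
  have abs_summable: "summable (\<lambda>k. norm (f k))"
    by (rule summable_comparison_test[where g = "\<lambda>k. norm x ^ k"]) (use term_bound small in auto)
  define s where "s = suminf f"
  have cauchy_term: "(\<Sum>i\<le>k. f i * f (k - i)) = (if k = 0 then 1 else if k = 1 then - x else 0)" for k
  proof -
    have "(\<Sum>i\<le>k. f i * f (k - i)) = (\<Sum>i\<le>k. c i * c (k - i)) *\<^sub>R x ^ k"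
      unfolding scaleR_left.sum by (intro sum.cong) (simp_all add: f_def power_add[symmetric])
    then show ?thesis
      by (simp add: c_def gbinomial_half_convolution)
  qed
  have "(\<lambda>k. \<Sum>i\<le>k. f i * f (k - i)) sums (s * s)"
    unfolding s_def by (rule Cauchy_product_sums[OF abs_summable abs_summable])
  moreover have "(\<lambda>k. if k = 0 then 1 else if k = 1 then - x else 0) sums (1 - x)"
    using sums_finite[of "{0, 1::nat}" "\<lambda>k. if k = 0 then 1 else if k = 1 then - x else 0"] by simp
  ultimately have square: "s * s = 1 - x"
    unfolding cauchy_term using sums_unique2 by blast
  have "st s = (\<Sum>k. st (f k))"
    unfolding s_def using bounded_linear.suminf[OF bounded_linear_st summable_norm_cancel[OF abs_summable]]
    by simp
  also have "(\<lambda>k. st (f k)) = f"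
    by (simp add: f_def st_scaleR st_power[OF sa] fun_eq_iff)
  finally show ?thesis
    using square s_def by blast
qed

lemma hermitian_square_scaleR_one_minus:
  assumes r: "(norm a)\<^sup>2 < r"
  shows "\<exists>t. st t * t = r *\<^sub>R 1 - st a * a"
proof -
  have r0: "r > 0"
    using r zero_le_power2[of "norm a"] by linarith
  define x where "x = (1/r) *\<^sub>R (st a * a)"
  have "st x = x"
    unfolding x_def by (simp add: st_scaleR st_mult)
  moreover have "norm x < 1"
    unfolding x_def using r r0 norm_st_mult_self[of a] by (simp add: field_simps)
  ultimately obtain s where s: "st s = s" "s * s = 1 - x"
    using selfadjoint_sqrt_one_minus by blast
  have "st (sqrt r *\<^sub>R s) * (sqrt r *\<^sub>R s) = r *\<^sub>R (1 - x)"
    using s r0 by (simp add: st_scaleR)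
  also have "\<dots> = r *\<^sub>R 1 - st a * a"
    using r0 by (simp add: x_def scaleR_diff_right)
  finally show ?thesis by blast
qed

end

section \<open>Matrices acting on vectors\<close>

text \<open>Vectors of \<open>\<complex>\<^sup>n\<close> are functions \<open>nat \<Rightarrow> complex\<close> of which only the values below \<open>n\<close> matter.\<close>

definition sqnorm :: "nat \<Rightarrow> (nat \<Rightarrow> complex) \<Rightarrow> real" where
  "sqnorm n v = (\<Sum>i<n. (cmod (v i))\<^sup>2)"

definition vnorm :: "nat \<Rightarrow> (nat \<Rightarrow> complex) \<Rightarrow> real" where
  "vnorm n v = sqrt (sqnorm n v)"

definition basis_fun :: "nat \<Rightarrow> nat \<Rightarrow> complex" where
  "basis_fun i j = (if j = i then 1 else 0)"

definition mat_app :: "complex mat \<Rightarrow> (nat \<Rightarrow> complex) \<Rightarrow> nat \<Rightarrow> complex" where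
  "mat_app M v p = (\<Sum>q<dim_col M. M $$ (p, q) * v q)"

definition quad_form :: "nat \<Rightarrow> complex mat \<Rightarrow> (nat \<Rightarrow> complex) \<Rightarrow> complex" where
  "quad_form n M w = (\<Sum>r<n. \<Sum>s<n. cnj (w r) * M $$ (r, s) * w s)"

definition mat_bounded :: "nat \<Rightarrow> complex mat \<Rightarrow> real \<Rightarrow> bool" where
  "mat_bounded n M c \<longleftrightarrow> (\<forall>v. vnorm n (mat_app M v) \<le> c * vnorm n v)"

lemma sum_lessThan_add: "(\<Sum>r<n + m. f r) = (\<Sum>r<n. f r) + (\<Sum>p<m. f (n + (p::nat)))"
  by (induction m) (auto simp: add_ac)

lemma sqnorm_nonneg: "0 \<le> sqnorm n v"
  unfolding sqnorm_def by (auto intro: sum_nonneg)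

lemma sum_cnj_mult_self: "(\<Sum>i<n. cnj (v i) * v i) = complex_of_real (sqnorm n v)"
proof -
  have "cnj z * z = complex_of_real ((cmod z)\<^sup>2)" for z
    by (metis complex_norm_square mult.commute)
  then show ?thesis
    unfolding sqnorm_def of_real_sum by (simp only:)
qed

lemma sqnorm_cong: "(\<And>p. p < n \<Longrightarrow> u p = v p) \<Longrightarrow> sqnorm n u = sqnorm n v"
  unfolding sqnorm_def by simp

lemma sqnorm_basis_fun:
  assumes "i < n"
  shows "sqnorm n (basis_fun i) = 1"
proof -
  have "sqnorm n (basis_fun i) = (\<Sum>j<n. if j = i then 1 else 0)"
    unfolding sqnorm_def basis_fun_def by (intro sum.cong) auto
  then show ?thesis
    using assms by simp
qed

lemma vnorm_nonneg: "0 \<le> vnorm n v"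
  unfolding vnorm_def by (simp add: sqnorm_nonneg)

lemma vnorm_eq_L2_set: "vnorm n v = L2_set (\<lambda>i. cmod (v i)) {..<n}"
  unfolding vnorm_def sqnorm_def L2_set_def by simp

lemma vnorm_diff_le:
  assumes "\<And>p. p < n \<Longrightarrow> u p = x p - y p"
  shows "vnorm n u \<le> vnorm n x + vnorm n y"
proof -
  have "vnorm n u \<le> L2_set (\<lambda>i. cmod (x i) + cmod (y i)) {..<n}"
    unfolding vnorm_eq_L2_set using assms by (intro L2_set_mono) (auto simp: norm_triangle_ineq4)
  also have "\<dots> \<le> vnorm n x + vnorm n y"
    unfolding vnorm_eq_L2_set by (rule L2_set_triangle_ineq)
  finally show ?thesis .
qed

lemma adj_dims [simp]: "dim_row (adj b) = dim_col b" "dim_col (adj b) = dim_row b"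
  unfolding adj_def by auto

lemma adj_carrier_mat: "b \<in> carrier_mat m n \<Longrightarrow> adj b \<in> carrier_mat n m"
  by auto

lemma index_adj [simp]: "i < dim_col b \<Longrightarrow> j < dim_row b \<Longrightarrow> adj b $$ (i, j) = cnj (b $$ (j, i))"
  unfolding adj_def by auto

lemma index_mult_mat_sum:
  assumes "A \<in> carrier_mat n m" "B \<in> carrier_mat m k" "i < n" "j < k"
  shows "(A * B) $$ (i, j) = (\<Sum>l<m. A $$ (i, l) * B $$ (l, j))"
  using assms by (simp add: scalar_prod_def lessThan_atLeast0)

lemma index_adj_mult_mat:
  assumes "b \<in> carrier_mat m n" "c \<in> carrier_mat m k" "i < n" "j < k"
  shows "(adj b * c) $$ (i, j) = (\<Sum>l<m. cnj (b $$ (l, i)) * c $$ (l, j))"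
  using assms index_mult_mat_sum[OF adj_carrier_mat[OF assms(1)] assms(2-4)] by simp

lemma mat_app_basis_fun: "i < dim_col M \<Longrightarrow> mat_app M (basis_fun i) p = M $$ (p, i)"
  unfolding mat_app_def basis_fun_def by (simp add: if_distrib cong: if_cong)

lemma mat_app_diff:
  "A \<in> carrier_mat n n \<Longrightarrow> B \<in> carrier_mat n n \<Longrightarrow> p < n \<Longrightarrow>
   mat_app (A - B) v p = mat_app A v p - mat_app B v p"
  unfolding mat_app_def by (simp add: sum_subtractf algebra_simps)

lemma mat_app_mult:
  assumes A: "A \<in> carrier_mat n n" and B: "B \<in> carrier_mat n n" and p: "p < n"
  shows "mat_app (A * B) v p = mat_app A (mat_app B v) p"
proof -
  have "mat_app (A * B) v p = (\<Sum>q<n. \<Sum>l<n. A $$ (p, l) * (B $$ (l, q) * v q))"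
    unfolding mat_app_def using A B
    by (intro sum.cong) (simp_all add: index_mult_mat_sum[OF A B p] sum_distrib_right mult.assoc del: index_mult_mat(1))
  also have "\<dots> = (\<Sum>l<n. \<Sum>q<n. A $$ (p, l) * (B $$ (l, q) * v q))"
    by (rule sum.swap)
  also have "\<dots> = mat_app A (mat_app B v) p"
    using A B unfolding mat_app_def by (simp add: sum_distrib_left)
  finally show ?thesis .
qed

lemma quad_form_adj_mult:
  assumes b: "b \<in> carrier_mat n n"
  shows "quad_form n (adj b * b) w = complex_of_real (sqnorm n (mat_app b w))"
proof -
  have "quad_form n (adj b * b) w = (\<Sum>r<n. \<Sum>s<n. \<Sum>l<n. cnj (b $$ (l, r) * w r) * (b $$ (l, s) * w s))"
    unfolding quad_form_def sum_distrib_left sum_distrib_right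
    by (intro sum.cong refl) (simp add: index_adj_mult_mat[OF b b] sum_distrib_left sum_distrib_right mult_ac del: index_mult_mat(1))
  also have "\<dots> = (\<Sum>l<n. \<Sum>r<n. \<Sum>s<n. cnj (b $$ (l, r) * w r) * (b $$ (l, s) * w s))"
    by (subst sum.swap) (rule sum.swap)
  also have "\<dots> = (\<Sum>l<n. cnj (mat_app b w l) * mat_app b w l)"
    using b by (simp add: mat_app_def cnj_sum sum_product)
  finally show ?thesis
    by (simp add: sum_cnj_mult_self)
qed

lemma quad_form_blocks:
  "quad_form (n + n) M w =
      (\<Sum>p<n. \<Sum>q<n. cnj (w p) * M $$ (p, q) * w q)
    + (\<Sum>p<n. \<Sum>q<n. cnj (w p) * M $$ (p, n + q) * w (n + q))
    + (\<Sum>p<n. \<Sum>q<n. cnj (w (n + p)) * M $$ (n + p, q) * w q)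
    + (\<Sum>p<n. \<Sum>q<n. cnj (w (n + p)) * M $$ (n + p, n + q) * w (n + q))"
  unfolding quad_form_def sum_lessThan_add sum.distrib by (simp add: add_ac)

lemma quad_form_one_mat: "quad_form n (1\<^sub>m n) v = complex_of_real (sqnorm n v)"
proof -
  have "(\<Sum>q<n. cnj (v p) * 1\<^sub>m n $$ (p, q) * v q) = cnj (v p) * v p" if "p < n" for p
  proof -
    have "(\<Sum>q<n. cnj (v p) * 1\<^sub>m n $$ (p, q) * v q) = (\<Sum>q<n. if q = p then cnj (v p) * v q else 0)"
      using that by (intro sum.cong) auto
    then show ?thesis
      using that by simp
  qed
  then show ?thesis
    unfolding quad_form_def by (simp add: sum_cnj_mult_self)
qed

lemma pos_mat_quad_form_nonneg:
  assumes "pos_mat M" "dim_row M = n"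
  shows "\<exists>y\<ge>0. quad_form n M w = complex_of_real y"
proof -
  obtain b where "b \<in> carrier_mat n n" "M = adj b * b"
    using assms unfolding pos_mat_def by auto
  then show ?thesis
    using quad_form_adj_mult sqnorm_nonneg by blast
qed

lemma pos_mat_hermitian:
  assumes "pos_mat M" "r < dim_row M" "s < dim_row M"
  shows "M $$ (s, r) = cnj (M $$ (r, s))"
proof -
  obtain b where b: "b \<in> carrier_mat (dim_row M) (dim_row M)" "M = adj b * b"
    using assms(1) unfolding pos_mat_def by auto
  show ?thesis
    using assms(2,3) by (subst (1 2) b(2)) (simp add: index_adj_mult_mat[OF b(1) b(1)] cnj_sum mult.commute)
qed

lemma sqnorm_mat_app_le:
  assumes "mat_bounded n M c" "0 \<le> c"
  shows "sqnorm n (mat_app M v) \<le> c\<^sup>2 * sqnorm n v"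
proof -
  have "vnorm n (mat_app M v) \<le> c * vnorm n v"
    using assms(1) unfolding mat_bounded_def by blast
  then have "(vnorm n (mat_app M v))\<^sup>2 \<le> (c * vnorm n v)\<^sup>2"
    by (rule power_mono) (rule vnorm_nonneg)
  then show ?thesis
    unfolding vnorm_def by (simp add: power_mult_distrib sqnorm_nonneg)
qed

lemma mat_boundedI:
  "0 \<le> c \<Longrightarrow> (\<And>v. sqnorm n (mat_app M v) \<le> c\<^sup>2 * sqnorm n v) \<Longrightarrow> mat_bounded n M c"
  unfolding mat_bounded_def vnorm_def
  by (metis real_sqrt_abs real_sqrt_le_mono real_sqrt_mult abs_of_nonneg)

lemma opnorm_mat_le:
  assumes M: "M \<in> carrier_mat n n" and bd: "mat_bounded n M c" and c: "0 \<le> c"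
  shows "opnorm_mat M \<le> c"
  unfolding opnorm_mat_def
proof (rule cSup_least)
  show "{sqrt (\<Sum>i<dim_row M. (cmod (\<Sum>j<dim_col M. M $$ (i, j) * v j))\<^sup>2) | v.
          (\<Sum>j<dim_col M. (cmod (v j))\<^sup>2) \<le> 1} \<noteq> {}"
    by (auto intro!: exI[of _ "\<lambda>_. 0"])
next
  fix x assume "x \<in> {sqrt (\<Sum>i<dim_row M. (cmod (\<Sum>j<dim_col M. M $$ (i, j) * v j))\<^sup>2) | v.
          (\<Sum>j<dim_col M. (cmod (v j))\<^sup>2) \<le> 1}"
  then obtain v where v: "x = vnorm n (mat_app M v)" "sqnorm n v \<le> 1"
    using M unfolding vnorm_def sqnorm_def mat_app_def by auto
  have "x \<le> c * vnorm n v"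
    using bd v(1) unfolding mat_bounded_def by simp
  also have "\<dots> \<le> c * 1"
    using v(2) c unfolding vnorm_def by (intro mult_left_mono) auto
  finally show "x \<le> c" by simp
qed

lemma add_diff_add_right_mat:
  fixes A B C :: "'a::ab_group_add mat"
  shows "A \<in> carrier_mat n m \<Longrightarrow> B \<in> carrier_mat n m \<Longrightarrow> C \<in> carrier_mat n m \<Longrightarrow> (B + A) - (C + A) = B - C"
  by (intro eq_matI) auto

lemma mat_bounded_diff:
  assumes "A \<in> carrier_mat n n" "B \<in> carrier_mat n n" "mat_bounded n A c" "mat_bounded n B d"
  shows "mat_bounded n (A - B) (c + d)"
  unfolding mat_bounded_def
proof
  fix v
  have "vnorm n (mat_app (A - B) v) \<le> vnorm n (mat_app A v) + vnorm n (mat_app B v)"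
    by (rule vnorm_diff_le) (rule mat_app_diff[OF assms(1,2)])
  also have "\<dots> \<le> c * vnorm n v + d * vnorm n v"
    using assms(3,4) unfolding mat_bounded_def by (intro add_mono) blast+
  finally show "vnorm n (mat_app (A - B) v) \<le> (c + d) * vnorm n v"
    by (simp add: algebra_simps)
qed

lemma mat_bounded_mult:
  assumes "A \<in> carrier_mat n n" "B \<in> carrier_mat n n" "mat_bounded n A c" "mat_bounded n B d" "0 \<le> c"
  shows "mat_bounded n (A * B) (c * d)"
  unfolding mat_bounded_def
proof
  fix v
  have "sqnorm n (mat_app (A * B) v) = sqnorm n (mat_app A (mat_app B v))"
    by (rule sqnorm_cong) (rule mat_app_mult[OF assms(1,2)])
  then have "vnorm n (mat_app (A * B) v) = vnorm n (mat_app A (mat_app B v))"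
    unfolding vnorm_def by simp
  also have "\<dots> \<le> c * vnorm n (mat_app B v)"
    using assms(3) unfolding mat_bounded_def by blast
  also have "\<dots> \<le> c * (d * vnorm n v)"
    using assms(4,5) unfolding mat_bounded_def by (simp add: mult_left_mono)
  finally show "vnorm n (mat_app (A * B) v) \<le> c * d * vnorm n v"
    by (simp add: mult.assoc)
qed

lemma ntr_diff: "A \<in> carrier_mat n n \<Longrightarrow> B \<in> carrier_mat n n \<Longrightarrow> ntr (A - B) = ntr A - ntr B"
  unfolding ntr_def by (simp add: sum_subtractf diff_divide_distrib)

lemma ntr_adj_mult_self:
  assumes M: "M \<in> carrier_mat n n"
  shows "ntr (adj M * M) = complex_of_real ((\<Sum>i<n. sqnorm n (\<lambda>l. M $$ (l, i))) / real n)"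
proof -
  have "(adj M * M) $$ (i, i) = complex_of_real (sqnorm n (\<lambda>l. M $$ (l, i)))" if "i < n" for i
    unfolding index_adj_mult_mat[OF M M that that] by (rule sum_cnj_mult_self)
  then show ?thesis
    using M unfolding ntr_def by simp
qed

lemma norm2_tr_eq:
  "M \<in> carrier_mat n n \<Longrightarrow> norm2_tr M = sqrt ((\<Sum>i<n. sqnorm n (\<lambda>l. M $$ (l, i))) / real n)"
  unfolding norm2_tr_def by (simp add: ntr_adj_mult_self)

lemma norm2_tr_nonneg:
  assumes M: "M \<in> carrier_mat n n"
  shows "0 \<le> norm2_tr M"
  unfolding norm2_tr_eq[OF M] by (simp add: sum_nonneg sqnorm_nonneg)

lemma ntr_adj_mult_self_norm2_tr:
  assumes M: "M \<in> carrier_mat n n"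
  shows "ntr (adj M * M) = complex_of_real ((norm2_tr M)\<^sup>2)"
  unfolding ntr_adj_mult_self[OF M] norm2_tr_eq[OF M] by (simp add: sum_nonneg sqnorm_nonneg)

lemma norm2_tr_le:
  assumes M: "M \<in> carrier_mat n n" and bd: "mat_bounded n M c" and c: "0 \<le> c" and n: "1 \<le> n"
  shows "norm2_tr M \<le> c"
proof -
  have "sqnorm n (\<lambda>l. M $$ (l, i)) \<le> c\<^sup>2" if "i < n" for i
  proof -
    have "sqnorm n (\<lambda>l. M $$ (l, i)) = sqnorm n (mat_app M (basis_fun i))"
      using M that by (intro sqnorm_cong) (simp add: mat_app_basis_fun)
    also have "\<dots> \<le> c\<^sup>2 * sqnorm n (basis_fun i)"
      by (rule sqnorm_mat_app_le[OF bd c])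
    finally show ?thesis
      using that by (simp add: sqnorm_basis_fun)
  qed
  then have "(\<Sum>i<n. sqnorm n (\<lambda>l. M $$ (l, i))) \<le> real n * c\<^sup>2"
    using sum_mono[of "{..<n}" "\<lambda>i. sqnorm n (\<lambda>l. M $$ (l, i))" "\<lambda>_. c\<^sup>2"] by simp
  then show ?thesis
    unfolding norm2_tr_eq[OF M] using n c
    by (intro real_le_lsqrt) (simp_all add: field_simps sum_nonneg sqnorm_nonneg)
qed

lemma cmod_ntr_le_norm2_tr:
  assumes M: "M \<in> carrier_mat n n" and n: "1 \<le> n"
  shows "cmod (ntr M) \<le> norm2_tr M"
proof -
  define S where "S = (\<Sum>i<n. sqnorm n (\<lambda>l. M $$ (l, i)))"
  have "(cmod (\<Sum>i<n. M $$ (i, i)))\<^sup>2 \<le> (\<Sum>i<n. cmod (M $$ (i, i)))\<^sup>2"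
    by (intro power_mono norm_sum) simp
  also have "\<dots> \<le> (\<Sum>i<n. (cmod (M $$ (i, i)))\<^sup>2) * real n"
    using sum_squared_le_sum_of_squares[of "\<lambda>i. cmod (M $$ (i, i))" "{..<n}"] by simp
  also have "\<dots> \<le> S * real n"
    unfolding S_def sqnorm_def
    by (intro mult_right_mono sum_mono member_le_sum[where f = "\<lambda>l. (cmod (M $$ (l, _)))\<^sup>2"]) auto
  finally have "(cmod (\<Sum>i<n. M $$ (i, i)))\<^sup>2 / (real n)\<^sup>2 \<le> S * real n / (real n)\<^sup>2"
    by (rule divide_right_mono) simp
  then have "(cmod (ntr M))\<^sup>2 \<le> S / real n"
    using M n unfolding ntr_def by (simp add: norm_divide power_divide power2_eq_square)
  then show ?thesis
    unfolding norm2_tr_eq[OF M] S_def[symmetric] by (rule real_le_rsqrt)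
qed

lemma tracial_state_mat_ntr: "1 \<le> n \<Longrightarrow> tracial_state_mat n ntr"
  unfolding tracial_state_mat_def
proof (intro conjI ballI allI)
  fix x y :: "complex mat" assume x: "x \<in> carrier_mat n n" and y: "y \<in> carrier_mat n n"
  show "ntr (x + y) = ntr x + ntr y"
    using x y unfolding ntr_def by (simp add: sum.distrib add_divide_distrib)
  have "(\<Sum>i<n. (x * y) $$ (i, i)) = (\<Sum>i<n. \<Sum>l<n. x $$ (i, l) * y $$ (l, i))"
    by (intro sum.cong refl, subst index_mult_mat_sum[OF x y]) auto
  also have "\<dots> = (\<Sum>l<n. \<Sum>i<n. y $$ (l, i) * x $$ (i, l))"
    by (subst sum.swap) (simp only: mult.commute)
  also have "\<dots> = (\<Sum>l<n. (y * x) $$ (l, l))"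
    by (intro sum.cong refl, subst index_mult_mat_sum[OF y x]) auto
  finally show "ntr (x * y) = ntr (y * x)"
    using x y unfolding ntr_def by simp
next
  fix c and x :: "complex mat" assume "x \<in> carrier_mat n n"
  then show "ntr (c \<cdot>\<^sub>m x) = c * ntr x"
    unfolding ntr_def by (simp add: sum_distrib_left)
next
  fix x :: "complex mat" assume "x \<in> carrier_mat n n"
  then show "Im (ntr (adj x * x)) = 0" "0 \<le> Re (ntr (adj x * x))"
    by (simp_all add: ntr_adj_mult_self_norm2_tr)
qed (simp add: ntr_def)

section \<open>Unital completely positive maps\<close>

lemma sum_lessThan_mult_div_mod:
  "(\<Sum>t<k * n. f (t div n) (t mod n)) = (\<Sum>l<k. \<Sum>m<(n::nat). f l m)"
proof (induction k)
  case (Suc k)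
  have "(\<Sum>t<Suc k * n. f (t div n) (t mod n))
      = (\<Sum>t<k * n. f (t div n) (t mod n)) + (\<Sum>m<n. f ((k * n + m) div n) ((k * n + m) mod n))"
    using sum_lessThan_add[of "\<lambda>t. f (t div n) (t mod n)" "k * n" n] by (simp add: add.commute)
  also have "(\<Sum>m<n. f ((k * n + m) div n) ((k * n + m) mod n)) = (\<Sum>m<n. f k m)"
    by (intro sum.cong refl) auto
  finally show ?case
    using Suc by simp
qed simp

lemma index_amp:
  "i < k * n \<Longrightarrow> j < k * n \<Longrightarrow> amp n \<phi> k X $$ (i, j) = \<phi> (X (i div n) (j div n)) $$ (i mod n, j mod n)"
  by (simp add: amp_def)

lemma amp_dims [simp]: "dim_row (amp n \<phi> k X) = k * n" "dim_col (amp n \<phi> k X) = k * n"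
  by (simp_all add: amp_def)

definition (in cstar_alg) gram_pair :: "'a \<Rightarrow> nat \<Rightarrow> nat \<Rightarrow> 'a" where
  "gram_pair a i j = (if i = 0 then (if j = 0 then 1 else a) else (if j = 0 then st a else st a * a))"

lemma (in cstar_alg) pos_amp_gram_pair: "pos_amp st 2 (gram_pair a)"
  unfolding pos_amp_def
proof (intro exI allI impI)
  let ?B = "\<lambda>(l::nat) (i::nat). if l = 0 then (if i = 0 then 1 else a) else 0"
  fix i j :: nat assume "i < 2" "j < 2"
  then show "gram_pair a i j = (\<Sum>l<2. st (?B l i) * ?B l j)"
    by (auto simp: gram_pair_def numeral_2_eq_2 less_Suc_eq)
qed

locale lin_map = cstar_alg sc st
  for sc :: "complex \<Rightarrow> 'a::{real_normed_algebra_1,banach} \<Rightarrow> 'a" and st +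
  fixes n :: nat and \<phi> :: "'a \<Rightarrow> complex mat"
  assumes complex_linear: "complex_linear_into sc n \<phi>"
begin

lemma map_carrier [simp]: "\<phi> a \<in> carrier_mat n n"
  using complex_linear unfolding complex_linear_into_def by blast

lemma map_dims [simp]: "dim_row (\<phi> a) = n" "dim_col (\<phi> a) = n"
  using map_carrier by blast+

lemma map_add: "\<phi> (a + b) = \<phi> a + \<phi> b"
  using complex_linear unfolding complex_linear_into_def by blast

lemma map_sc: "\<phi> (sc c a) = c \<cdot>\<^sub>m \<phi> a"
  using complex_linear unfolding complex_linear_into_def by blast

lemma index_map_add: "p < n \<Longrightarrow> q < n \<Longrightarrow> \<phi> (a + b) $$ (p, q) = \<phi> a $$ (p, q) + \<phi> b $$ (p, q)"
  by (simp add: map_add)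

lemma index_map_diff: "p < n \<Longrightarrow> q < n \<Longrightarrow> \<phi> (a - b) $$ (p, q) = \<phi> a $$ (p, q) - \<phi> b $$ (p, q)"
  using index_map_add[of p q "a - b" b] by simp

lemma index_map_scaleR: "p < n \<Longrightarrow> q < n \<Longrightarrow> \<phi> (r *\<^sub>R a) $$ (p, q) = complex_of_real r * \<phi> a $$ (p, q)"
  using map_sc[of "complex_of_real r" a] by (simp add: sc_of_real)

lemma index_map_sum:
  "p < n \<Longrightarrow> q < n \<Longrightarrow> \<phi> (\<Sum>l<(k::nat). f l) $$ (p, q) = (\<Sum>l<k. \<phi> (f l) $$ (p, q))"
proof (induction k)
  case 0
  then show ?case
    using index_map_diff[of p q 0 0] by simp
qed (simp add: index_map_add)

lemma ntr_map_diff: "ntr (\<phi> (a - b)) = ntr (\<phi> a) - ntr (\<phi> b)"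
  unfolding ntr_def by (simp add: index_map_diff sum_subtractf diff_divide_distrib)

lemma map_mult_defect_eq:
  assumes "a' \<in> mult_domain \<phi>"
  shows "\<phi> (a * b) - \<phi> a * \<phi> b = \<phi> ((a - a') * b) - \<phi> (a - a') * \<phi> b"
proof -
  have "\<phi> (a * b) = \<phi> ((a - a') * b) + \<phi> a' * \<phi> b"
    using assms map_add[of "(a - a') * b" "a' * b"] unfolding mult_domain_def by (simp add: algebra_simps)
  moreover have "\<phi> a * \<phi> b = \<phi> (a - a') * \<phi> b + \<phi> a' * \<phi> b"
    using map_add[of "a - a'" a'] by (simp add: add_mult_distrib_mat[OF map_carrier map_carrier map_carrier])
  ultimately show ?thesis
    by (simp add: add_diff_add_right_mat[OF mult_carrier_mat[OF map_carrier map_carrier]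
        map_carrier mult_carrier_mat[OF map_carrier map_carrier]])
qed


lemma amp_eq_adj_mult_if_star_hom:
  assumes mult: "\<And>a b. \<phi> (a * b) = \<phi> a * \<phi> b" and star: "\<And>a. \<phi> (st a) = adj (\<phi> a)"
    and X: "\<And>i j. i < k \<Longrightarrow> j < k \<Longrightarrow> X i j = (\<Sum>l<k. st (B l i) * B l j)"
  shows "amp n \<phi> k X = adj (amp n \<phi> k B) * amp n \<phi> k B"
proof (rule eq_matI)
  have C: "amp n \<phi> k B \<in> carrier_mat (k * n) (k * n)"
    by (intro carrier_matI) simp_all
  fix r s assume "r < dim_row (adj (amp n \<phi> k B) * amp n \<phi> k B)" "s < dim_col (adj (amp n \<phi> k B) * amp n \<phi> k B)"
  then have rs: "r < k * n" "s < k * n"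
    by simp_all
  moreover have "0 < n"
    using rs by (cases n) auto
  ultimately have dm: "r div n < k" "s div n < k" "r mod n < n" "s mod n < n"
    by (simp_all add: less_mult_imp_div_less)
  have "amp n \<phi> k X $$ (r, s) = \<phi> (\<Sum>l<k. st (B l (r div n)) * B l (s div n)) $$ (r mod n, s mod n)"
    using rs dm by (simp add: index_amp X)
  also have "\<dots> = (\<Sum>l<k. \<Sum>m<n. cnj (\<phi> (B l (r div n)) $$ (m, r mod n)) * \<phi> (B l (s div n)) $$ (m, s mod n))"
    using dm by (simp add: index_map_sum mult star index_adj_mult_mat[OF map_carrier map_carrier] del: index_mult_mat(1))
  also have "\<dots> = (\<Sum>t<k * n. cnj (\<phi> (B (t div n) (r div n)) $$ (t mod n, r mod n)) * \<phi> (B (t div n) (s div n)) $$ (t mod n, s mod n))"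
    by (rule sum_lessThan_mult_div_mod[symmetric])
  also have "\<dots> = (\<Sum>t<k * n. cnj (amp n \<phi> k B $$ (t, r)) * amp n \<phi> k B $$ (t, s))"
    using rs by (intro sum.cong refl) (simp add: index_amp)
  also have "\<dots> = (adj (amp n \<phi> k B) * amp n \<phi> k B) $$ (r, s)"
    by (rule index_adj_mult_mat[OF C C rs, symmetric])
  finally show "amp n \<phi> k X $$ (r, s) = (adj (amp n \<phi> k B) * amp n \<phi> k B) $$ (r, s)" .
qed simp_all

end

lemma (in cstar_alg) lin_map_if_ucp: "ucp sc st n \<phi> \<Longrightarrow> lin_map sc st n \<phi>"
  unfolding ucp_def by (blast intro: lin_map.intro cstar_alg_axioms lin_map_axioms.intro)

locale ucp_map = cstar_alg sc st
  for sc :: "complex \<Rightarrow> 'a::{real_normed_algebra_1,banach} \<Rightarrow> 'a" and st +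
  fixes n :: nat and \<phi> :: "'a \<Rightarrow> complex mat"
  assumes ucp: "ucp sc st n \<phi>"

sublocale ucp_map \<subseteq> lin_map
  by (rule lin_map_if_ucp[OF ucp])

lemma (in cstar_alg) ucp_map_if_ucp: "ucp sc st n \<phi> \<Longrightarrow> ucp_map sc st n \<phi>"
  by (intro ucp_map.intro cstar_alg_axioms ucp_map_axioms.intro)

context ucp_map
begin

lemma map_one: "\<phi> 1 = 1\<^sub>m n"
  using ucp unfolding ucp_def by blast

lemma pos_mat_amp: "pos_amp st k X \<Longrightarrow> pos_mat (amp n \<phi> k X)"
  using ucp unfolding ucp_def by blast

text \<open>Since \<open>r - a\<^sup>*a = t\<^sup>*t\<close> is positive, so is its image \<open>r - \<phi>(a\<^sup>*a)\<close>.\<close>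

lemma quad_form_map_st_mult_le:
  assumes r: "(norm a)\<^sup>2 < r"
  shows "Re (quad_form n (\<phi> (st a * a)) v) \<le> r * sqnorm n v"
proof -
  obtain t where t: "st t * t = r *\<^sub>R 1 - st a * a"
    using hermitian_square_scaleR_one_minus[OF r] by blast
  have "pos_amp st 1 (\<lambda>_ _. st t * t)"
    unfolding pos_amp_def by (intro exI[of _ "\<lambda>_ _. t"]) simp
  then have "pos_mat (amp n \<phi> 1 (\<lambda>_ _. st t * t))"
    by (rule pos_mat_amp)
  moreover have "dim_row (amp n \<phi> 1 (\<lambda>_ _. st t * t)) = n"
    by simp
  ultimately obtain y where y: "0 \<le> y" "quad_form n (amp n \<phi> 1 (\<lambda>_ _. st t * t)) v = complex_of_real y"
    using pos_mat_quad_form_nonneg by blast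
  have "quad_form n (amp n \<phi> 1 (\<lambda>_ _. st t * t)) v
      = complex_of_real r * quad_form n (1\<^sub>m n) v - quad_form n (\<phi> (st a * a)) v"
    unfolding quad_form_def t sum_distrib_left sum_subtractf[symmetric]
    by (intro sum.cong refl) (simp add: amp_def index_map_diff index_map_scaleR map_one algebra_simps)
  then have "complex_of_real y = complex_of_real (r * sqnorm n v) - quad_form n (\<phi> (st a * a)) v"
    using y(2) by (simp add: quad_form_one_mat)
  then have "quad_form n (\<phi> (st a * a)) v = complex_of_real (r * sqnorm n v - y)"
    by (simp add: algebra_simps)
  then have "Re (quad_form n (\<phi> (st a * a)) v) = r * sqnorm n v - y"
    by simp
  then show ?thesis
    using y(1) by simp
qed

lemma index_amp_gram_pair:
  assumes "p < n" "q < n"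
  shows "amp n \<phi> 2 (gram_pair a) $$ (p, q) = 1\<^sub>m n $$ (p, q)"
    and "amp n \<phi> 2 (gram_pair a) $$ (p, n + q) = \<phi> a $$ (p, q)"
    and "amp n \<phi> 2 (gram_pair a) $$ (n + p, q) = \<phi> (st a) $$ (p, q)"
    and "amp n \<phi> 2 (gram_pair a) $$ (n + p, n + q) = \<phi> (st a * a) $$ (p, q)"
  using assms by (simp_all add: index_amp gram_pair_def map_one)

lemma map_st: "\<phi> (st a) = adj (\<phi> a)"
proof (rule eq_matI)
  fix p q assume "p < dim_row (adj (\<phi> a))" "q < dim_col (adj (\<phi> a))"
  then have pq: "p < n" "q < n"
    by simp_all
  have "amp n \<phi> 2 (gram_pair a) $$ (n + p, q) = cnj (amp n \<phi> 2 (gram_pair a) $$ (q, n + p))"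
    using pq by (intro pos_mat_hermitian pos_mat_amp pos_amp_gram_pair) simp_all
  then show "\<phi> (st a) $$ (p, q) = adj (\<phi> a) $$ (p, q)"
    using pq by (simp add: index_amp_gram_pair)
qed simp_all

text \<open>A Kadison-Schwarz type inequality \<open>\<phi>(a)\<^sup>*\<phi>(a) \<le> \<phi>(a\<^sup>*a)\<close>, tested on the vector \<open>v\<close>: evaluate
  the positive form of \<open>\<phi>\<close> applied to the Gram matrix of \<open>(1, a)\<close> at the vector \<open>(-\<phi>(a)v, v)\<close>.\<close>

lemma sqnorm_map_le_quad_form:
  "sqnorm n (mat_app (\<phi> a) v) \<le> Re (quad_form n (\<phi> (st a * a)) v)"
proof -
  define M where "M = amp n \<phi> 2 (gram_pair a)"
  define z where "z = mat_app (\<phi> a) v"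
  define w where "w r = (if r < n then - z r else v (r - n))" for r
  have z: "z p = (\<Sum>q<n. \<phi> a $$ (p, q) * v q)" for p
    unfolding z_def mat_app_def by simp
  have "pos_mat M"
    unfolding M_def by (rule pos_mat_amp[OF pos_amp_gram_pair])
  then obtain y where y: "0 \<le> y" "quad_form (n + n) M w = complex_of_real y"
    using pos_mat_quad_form_nonneg[of M "n + n" w] unfolding M_def by auto
  have "(\<Sum>p<n. \<Sum>q<n. cnj (w p) * M $$ (p, q) * w q) = quad_form n (1\<^sub>m n) z"
    unfolding quad_form_def by (simp add: M_def index_amp_gram_pair w_def)
  moreover have "(\<Sum>p<n. \<Sum>q<n. cnj (w p) * M $$ (p, n + q) * w (n + q)) = - (\<Sum>p<n. cnj (z p) * z p)"
    by (simp add: M_def index_amp_gram_pair w_def z sum_distrib_left mult.assoc sum_negf)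
  moreover have "(\<Sum>p<n. \<Sum>q<n. cnj (w (n + p)) * M $$ (n + p, q) * w q) = - (\<Sum>q<n. cnj (z q) * z q)"
  proof -
    have "(\<Sum>p<n. \<Sum>q<n. cnj (w (n + p)) * M $$ (n + p, q) * w q)
        = (\<Sum>q<n. \<Sum>p<n. cnj (\<phi> a $$ (q, p) * v p) * (- z q))"
      by (subst sum.swap) (simp add: M_def index_amp_gram_pair map_st w_def mult_ac)
    also have "\<dots> = - (\<Sum>q<n. cnj (z q) * z q)"
      by (simp add: z cnj_sum sum_distrib_right sum_negf)
    finally show ?thesis .
  qed
  moreover have "(\<Sum>p<n. \<Sum>q<n. cnj (w (n + p)) * M $$ (n + p, n + q) * w (n + q)) = quad_form n (\<phi> (st a * a)) v"
    unfolding quad_form_def by (simp add: M_def index_amp_gram_pair w_def)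
  ultimately have "complex_of_real y = quad_form n (\<phi> (st a * a)) v - complex_of_real (sqnorm n z)"
    using y(2) unfolding quad_form_blocks by (simp add: quad_form_one_mat sum_cnj_mult_self)
  then have "quad_form n (\<phi> (st a * a)) v = complex_of_real (y + sqnorm n z)"
    by (simp add: algebra_simps)
  then show ?thesis
    using y(1) z_def by simp
qed

lemma sqnorm_map_le: "sqnorm n (mat_app (\<phi> a) v) \<le> (norm a)\<^sup>2 * sqnorm n v"
proof (rule field_le_epsilon)
  fix e :: real assume e: "0 < e"
  define r where "r = (norm a)\<^sup>2 + e / (sqnorm n v + 1)"
  have "(norm a)\<^sup>2 < r"
    unfolding r_def using e sqnorm_nonneg[of n v] by simp
  then have "sqnorm n (mat_app (\<phi> a) v) \<le> r * sqnorm n v"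
    using sqnorm_map_le_quad_form[of a v] quad_form_map_st_mult_le[of a r v] by simp
  also have "\<dots> = (norm a)\<^sup>2 * sqnorm n v + e * (sqnorm n v / (sqnorm n v + 1))"
    unfolding r_def using sqnorm_nonneg[of n v] by (simp add: field_simps)
  also have "\<dots> \<le> (norm a)\<^sup>2 * sqnorm n v + e * 1"
    using e sqnorm_nonneg[of n v] by (intro add_left_mono mult_left_mono) auto
  finally show "sqnorm n (mat_app (\<phi> a) v) \<le> (norm a)\<^sup>2 * sqnorm n v + e"
    by simp
qed

lemma mat_bounded_map: "mat_bounded n (\<phi> a) (norm a)"
  by (rule mat_boundedI) (simp_all add: sqnorm_map_le)

lemma opnorm_map_le: "opnorm_mat (\<phi> a) \<le> norm a"
  by (rule opnorm_mat_le[OF map_carrier mat_bounded_map]) simp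

lemma cmod_ntr_map_le:
  assumes "1 \<le> n"
  shows "cmod (ntr (\<phi> a)) \<le> norm a"
  using cmod_ntr_le_norm2_tr[OF map_carrier assms] norm2_tr_le[OF map_carrier mat_bounded_map norm_ge_zero assms]
  by (rule order_trans)

lemma norm2_tr_mult_defect_le:
  assumes n: "1 \<le> n" and a': "a' \<in> mult_domain \<phi>"
  shows "norm2_tr (\<phi> (a * b) - \<phi> a * \<phi> b) \<le> 2 * norm (a - a') * norm b"
proof -
  have "mat_bounded n (\<phi> ((a - a') * b) - \<phi> (a - a') * \<phi> b) (norm ((a - a') * b) + norm (a - a') * norm b)"
    by (rule mat_bounded_diff[OF map_carrier mult_carrier_mat[OF map_carrier map_carrier] mat_bounded_map
        mat_bounded_mult[OF map_carrier map_carrier mat_bounded_map mat_bounded_map norm_ge_zero]])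
  then have "norm2_tr (\<phi> ((a - a') * b) - \<phi> (a - a') * \<phi> b) \<le> norm ((a - a') * b) + norm (a - a') * norm b"
    by (rule norm2_tr_le[OF minus_carrier_mat[OF mult_carrier_mat[OF map_carrier map_carrier]] _ _ n]) simp
  also have "\<dots> \<le> 2 * norm (a - a') * norm b"
    using norm_mult_ineq[of "a - a'" b] by (simp add: mult.commute)
  finally show ?thesis
    by (simp only: map_mult_defect_eq[OF a', of a b])
qed


lemma one_mem_mult_domain: "1 \<in> mult_domain \<phi>"
  unfolding mult_domain_def by (simp add: map_one)

lemma dist_ntr_map_le: "1 \<le> n \<Longrightarrow> dist (ntr (\<phi> a)) (ntr (\<phi> b)) \<le> dist a b"
  using cmod_ntr_map_le[of "a - b"] by (simp add: dist_norm ntr_map_diff)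

lemma norm2_tr_mult_defect_le_infdist:
  assumes n: "1 \<le> n"
  shows "norm2_tr (\<phi> (a * b) - \<phi> a * \<phi> b) \<le> 2 * infdist a (mult_domain \<phi>) * norm b"
proof (cases "b = 0")
  case True
  then show ?thesis
    using norm2_tr_mult_defect_le[OF n one_mem_mult_domain, of a b] by simp
next
  case False
  have ne: "mult_domain \<phi> \<noteq> {}"
    using one_mem_mult_domain by blast
  have "norm2_tr (\<phi> (a * b) - \<phi> a * \<phi> b) / (2 * norm b) \<le> infdist a (mult_domain \<phi>)"
    unfolding infdist_notempty[OF ne]
  proof (rule cINF_greatest)
    fix a' assume "a' \<in> mult_domain \<phi>"
    then show "norm2_tr (\<phi> (a * b) - \<phi> a * \<phi> b) / (2 * norm b) \<le> dist a a'"
      using norm2_tr_mult_defect_le[OF n] False by (simp add: divide_le_eq dist_norm mult_ac)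
  qed (rule ne)
  then show ?thesis
    using False by (simp add: divide_le_eq mult_ac)
qed

end

lemma (in cstar_alg) ucp_if_ustar_hom:
  assumes hom: "ustar_hom sc st n \<pi>"
  shows "ucp sc st n \<pi>"
proof -
  interpret lin_map sc st n \<pi>
    using hom unfolding ustar_hom_def by unfold_locales blast
  have "pos_mat (amp n \<pi> k X)" if pos: "pos_amp st k X" for k X
  proof -
    obtain B where "\<And>i j. i < k \<Longrightarrow> j < k \<Longrightarrow> X i j = (\<Sum>l<k. st (B l i) * B l j)"
      using pos unfolding pos_amp_def by blast
    then have "amp n \<pi> k X = adj (amp n \<pi> k B) * amp n \<pi> k B"
      using hom unfolding ustar_hom_def by (intro amp_eq_adj_mult_if_star_hom) auto
    then show ?thesis
      unfolding pos_mat_def by (intro bexI[of _ "amp n \<pi> k B"] carrier_matI) simp_all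
  qed
  then show ?thesis
    using hom unfolding ucp_def ustar_hom_def by blast
qed

lemma mult_domain_ustar_hom: "ustar_hom sc st n \<pi> \<Longrightarrow> mult_domain \<pi> = UNIV"
  unfolding mult_domain_def ustar_hom_def by auto

section \<open>Amenable and locally finite dimensional traces\<close>

lemma free_ultrafilter_le_sequentially:
  assumes "free_ultrafilter U"
  shows "U \<le> sequentially"
  unfolding le_sequentially
proof
  fix N
  have "\<forall>m\<in>{..<N}. eventually (\<lambda>k. k \<noteq> m) U"
    using assms unfolding free_ultrafilter_def by blast
  then have "eventually (\<lambda>k. \<forall>m\<in>{..<N}. k \<noteq> m) U"
    by (rule eventually_ball_finite[rotated]) simp
  then show "eventually (\<lambda>k. N \<le> k) U"
    by (rule eventually_mono) (blast intro: leI lessThan_iff[THEN iffD2])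
qed

lemma ultra_null_ntr_iff:
  assumes "\<And>k. x k \<in> carrier_mat (n k) (n k)"
  shows "ultra_null U (\<lambda>_. ntr) x \<longleftrightarrow> ((\<lambda>k. norm2_tr (x k)) \<longlongrightarrow> 0) U"
proof
  assume "ultra_null U (\<lambda>_. ntr) x"
  then have "((\<lambda>k. sqrt (Re (ntr (adj (x k) * x k)))) \<longlongrightarrow> sqrt (Re 0)) U"
    unfolding ultra_null_def by (intro tendsto_intros)
  then show "((\<lambda>k. norm2_tr (x k)) \<longlongrightarrow> 0) U"
    unfolding norm2_tr_def by simp
next
  assume "((\<lambda>k. norm2_tr (x k)) \<longlongrightarrow> 0) U"
  then have "((\<lambda>k. complex_of_real ((norm2_tr (x k))\<^sup>2)) \<longlongrightarrow> complex_of_real (0\<^sup>2)) U"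
    by (intro tendsto_intros)
  then show "ultra_null U (\<lambda>_. ntr) x"
    unfolding ultra_null_def by (simp add: ntr_adj_mult_self_norm2_tr[OF assms])
qed

lemma ultra_null_ntr_zero: "ultra_null U (\<lambda>_. ntr) (\<lambda>k. 0\<^sub>m (n k) (n k))"
  unfolding ultra_null_def ntr_def by simp

lemma tendsto_ntr_if_norm2_tr_diff:
  assumes x: "\<And>k. x k \<in> carrier_mat (n k) (n k)" and y: "\<And>k. y k \<in> carrier_mat (n k) (n k)"
    and n: "\<And>k. 1 \<le> n k"
    and diff: "((\<lambda>k. norm2_tr (x k - y k)) \<longlongrightarrow> 0) F" and lim: "((\<lambda>k. ntr (x k)) \<longlongrightarrow> t) F"
  shows "((\<lambda>k. ntr (y k)) \<longlongrightarrow> t) F"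
proof -
  have "((\<lambda>k. ntr (x k - y k)) \<longlongrightarrow> 0) F"
    using cmod_ntr_le_norm2_tr[OF minus_carrier_mat[OF y] n]
    by (intro Lim_null_comparison[OF _ diff] always_eventually) auto
  then have "((\<lambda>k. ntr (x k) - ntr (x k - y k)) \<longlongrightarrow> t - 0) F"
    by (intro tendsto_diff lim)
  then show ?thesis
    by (simp add: ntr_diff[OF x y])
qed

lemma LIMSEQ_if_diagonal_on_dense:
  fixes f :: "nat \<Rightarrow> 'a::metric_space \<Rightarrow> 'b::metric_space"
  assumes dense: "\<And>e. 0 < e \<Longrightarrow> \<exists>i. dist a (d i) < e"
    and lip: "\<And>j b. dist (f j a) (f j b) \<le> dist a b" and g_lip: "\<And>b. dist (g b) (g a) \<le> dist b a"
    and diag: "\<And>i j. i \<le> j \<Longrightarrow> dist (f j (d i)) (g (d i)) < 1 / Suc j"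
  shows "(\<lambda>j. f j a) \<longlonglongrightarrow> g a"
proof (rule metric_LIMSEQ_I)
  fix e :: real assume "0 < e"
  then obtain i where i: "dist a (d i) < e / 3"
    using dense[of "e / 3"] by auto
  obtain N where N: "1 / Suc N < e / 3"
    using \<open>0 < e\<close> by (metis divide_pos_pos nat_approx_posE zero_less_numeral)
  have "dist (f j a) (g a) < e" if "max i N \<le> j" for j
  proof -
    have "1 / real (Suc j) \<le> 1 / Suc N"
      using that by (simp add: frac_le)
    then have "dist (f j (d i)) (g (d i)) < e / 3"
      using diag[of i j] that N by linarith
    moreover have "dist (f j a) (f j (d i)) < e / 3" "dist (g (d i)) (g a) < e / 3"
      using lip g_lip i by (metis dist_commute le_less_trans)+
    ultimately show ?thesis
      using dist_triangle[of "f j a" "g a" "f j (d i)"] dist_triangle[of "f j (d i)" "g a" "g (d i)"]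
      by linarith
  qed
  then show "\<exists>N. \<forall>j\<ge>N. dist (f j a) (g a) < e"
    by blast
qed

text \<open>Pick \<open>kk j\<close> so that \<open>f (kk j)\<close> is \<open>1/(j+1)\<close>-close to \<open>g\<close> at the first \<open>j+1\<close> points of a
  dense sequence.\<close>

lemma separable_diagonal_subsequence:
  fixes f :: "nat \<Rightarrow> 'a::metric_space \<Rightarrow> 'b::metric_space"
  assumes sep: "separable_alg TYPE('a)" and F: "F \<noteq> bot" and P: "eventually P F"
    and lim: "\<And>a. ((\<lambda>k. f k a) \<longlongrightarrow> g a) F"
    and lip: "\<And>k a b. P k \<Longrightarrow> dist (f k a) (f k b) \<le> dist a b"
  shows "\<exists>kk. (\<forall>j. P (kk j)) \<and> (\<forall>a. (\<lambda>j. f (kk j) a) \<longlonglongrightarrow> g a)"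
proof -
  obtain D :: "'a set" where D: "countable D" "closure D = UNIV"
    using sep unfolding separable_alg_def by blast
  define d where "d = from_nat_into D"
  have dense: "\<exists>i. dist a (d i) < e" if e: "0 < e" for a e
  proof -
    have "a \<in> closure D"
      using D(2) by simp
    then obtain y where "y \<in> D" "dist y a < e"
      using e unfolding closure_approachable by blast
    then show ?thesis
      using from_nat_into_surj[OF D(1)] unfolding d_def by (metis dist_commute)
  qed
  have g_lip: "dist (g a) (g b) \<le> dist a b" for a b
    using tendsto_dist[OF lim lim] F eventually_mono[OF P lip]
    by (intro tendsto_upperbound[of "\<lambda>k. dist (f k a) (f k b)" _ F]) auto
  have "eventually (\<lambda>k. P k \<and> (\<forall>i\<in>{..j}. dist (f k (d i)) (g (d i)) < 1 / Suc j)) F" for j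
    using P by (intro eventually_conj eventually_ball_finite ballI) (auto intro: lim[THEN tendstoD])
  then have "\<exists>k. P k \<and> (\<forall>i\<le>j. dist (f k (d i)) (g (d i)) < 1 / Suc j)" for j
    using eventually_happens[of _ F] F by fastforce
  then obtain kk where kk: "\<And>j. P (kk j)" "\<And>i j. i \<le> j \<Longrightarrow> dist (f (kk j) (d i)) (g (d i)) < 1 / Suc j"
    by metis
  have "(\<lambda>j. f (kk j) a) \<longlonglongrightarrow> g a" for a
    using dense lip[OF kk(1)] g_lip kk(2) by (rule LIMSEQ_if_diagonal_on_dense)
  with kk(1) show ?thesis
    by blast
qed

context cstar_alg
begin

lemma AT_LFD_subset_AT: "AT_LFD sc st \<subseteq> AT sc st"
proof
  fix \<tau> assume "\<tau> \<in> AT_LFD sc st"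
  then obtain n \<phi> where tr: "tracial_state sc st \<tau>"
    and ucp: "\<And>k. 1 \<le> n k \<and> ucp sc st (n k) (\<phi> k)"
    and lim: "\<And>a. (\<lambda>k. ntr (\<phi> k a)) \<longlonglongrightarrow> \<tau> a"
    and dom: "\<And>a. (\<lambda>k. infdist a (mult_domain (\<phi> k))) \<longlonglongrightarrow> 0"
    unfolding AT_LFD_def by blast
  have car: "\<phi> k a \<in> carrier_mat (n k) (n k)" for k a
    using lin_map.map_carrier[OF lin_map_if_ucp[OF conjunct2[OF ucp]]] .
  have "(\<lambda>k. norm2_tr (\<phi> k (a * b) - \<phi> k a * \<phi> k b)) \<longlonglongrightarrow> 0" for a b
  proof (rule tendsto_sandwich[OF _ _ tendsto_const])
    show "\<forall>\<^sub>F k in sequentially. 0 \<le> norm2_tr (\<phi> k (a * b) - \<phi> k a * \<phi> k b)"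
      using norm2_tr_nonneg[OF minus_carrier_mat[OF mult_carrier_mat[OF car car]]] by simp
    show "\<forall>\<^sub>F k in sequentially. norm2_tr (\<phi> k (a * b) - \<phi> k a * \<phi> k b) \<le> 2 * infdist a (mult_domain (\<phi> k)) * norm b"
      using ucp_map.norm2_tr_mult_defect_le_infdist[OF ucp_map_if_ucp[OF conjunct2[OF ucp]] conjunct1[OF ucp]]
      by simp
    have "(\<lambda>k. 2 * infdist a (mult_domain (\<phi> k)) * norm b) \<longlonglongrightarrow> 2 * 0 * norm b"
      by (intro tendsto_intros dom)
    then show "(\<lambda>k. 2 * infdist a (mult_domain (\<phi> k)) * norm b) \<longlonglongrightarrow> 0"
      by simp
  qed
  then show "\<tau> \<in> AT sc st"
    unfolding AT_def using tr ucp lim by blast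
qed

lemma ustar_hom_ultra_if_asymptotically_multiplicative:
  assumes U: "U \<le> sequentially" and ucp: "\<And>k. ucp sc st (n k) (\<phi> k)"
    and mult: "\<And>a b. (\<lambda>k. norm2_tr (\<phi> k (a * b) - \<phi> k a * \<phi> k b)) \<longlonglongrightarrow> 0"
  shows "ustar_hom_ultra sc st U n (\<lambda>_. ntr) (\<lambda>a k. \<phi> k a)"
proof -
  have car: "\<phi> k a \<in> carrier_mat (n k) (n k)" for k a
    using lin_map.map_carrier[OF lin_map_if_ucp[OF ucp]] .
  have exact: "ultra_null U (\<lambda>_. ntr) (\<lambda>k. x k - y k)"
    if "\<And>k. x k = y k" "\<And>k. x k \<in> carrier_mat (n k) (n k)" for x y
  proof -
    have "(\<lambda>k. x k - y k) = (\<lambda>k. 0\<^sub>m (n k) (n k))"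
      by (simp add: that(1)[symmetric] minus_r_inv_mat[OF that(2)])
    then show ?thesis
      by (simp add: ultra_null_ntr_zero)
  qed
  show ?thesis
    unfolding ustar_hom_ultra_def
  proof (intro conjI allI)
    show "\<exists>B. \<forall>k. opnorm_mat (\<phi> k a) \<le> B" for a
      using ucp_map.opnorm_map_le[OF ucp_map_if_ucp[OF ucp]] by blast
    show "ultra_null U (\<lambda>_. ntr) (\<lambda>k. \<phi> k (a * b) - \<phi> k a * \<phi> k b)" for a b
      using car mult[of a b] tendsto_mono[OF U]
      by (subst ultra_null_ntr_iff[of _ n]) (auto intro: minus_carrier_mat mult_carrier_mat)
  qed (use car in \<open>auto intro!: exact adj_carrier_mat simp: lin_map.map_add[OF lin_map_if_ucp[OF ucp]]
      lin_map.map_sc[OF lin_map_if_ucp[OF ucp]] ucp_map.map_st[OF ucp_map_if_ucp[OF ucp]]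
      ucp_map.map_one[OF ucp_map_if_ucp[OF ucp]]\<close>)
qed

lemma tendsto_ntr_approximate_lift:
  assumes U: "U \<le> sequentially" and ucp: "\<And>k. 1 \<le> n k \<and> ucp sc st (n k) (\<phi> k)"
    and lim: "(\<lambda>k. ntr (\<phi> k a)) \<longlonglongrightarrow> t"
    and E: "eventually (\<lambda>k. k \<in> E) U" and \<pi>: "\<And>k. k \<in> E \<Longrightarrow> ucp sc st (n k) (\<pi> k)"
    and lift: "ultra_null U (\<lambda>_. ntr) (\<lambda>k. \<phi> k a - (if k \<in> E then \<pi> k a else 0\<^sub>m (n k) (n k)))"
  shows "((\<lambda>k. ntr (\<pi> k a)) \<longlongrightarrow> t) U"
proof -
  define \<psi> where "\<psi> k = (if k \<in> E then \<pi> k a else 0\<^sub>m (n k) (n k))" for k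
  have car: "\<phi> k a \<in> carrier_mat (n k) (n k)" "\<psi> k \<in> carrier_mat (n k) (n k)" for k
    using lin_map.map_carrier[OF lin_map_if_ucp[OF conjunct2[OF ucp]]]
      lin_map.map_carrier[OF lin_map_if_ucp[OF \<pi>]] by (auto simp: \<psi>_def)
  have "((\<lambda>k. ntr (\<psi> k)) \<longlongrightarrow> t) U"
  proof (rule tendsto_ntr_if_norm2_tr_diff[where x = "\<lambda>k. \<phi> k a" and n = n])
    show "((\<lambda>k. norm2_tr (\<phi> k a - \<psi> k)) \<longlongrightarrow> 0) U"
      using lift ultra_null_ntr_iff[of "\<lambda>k. \<phi> k a - \<psi> k" n U] car
      by (simp add: \<psi>_def minus_carrier_mat)
    show "((\<lambda>k. ntr (\<phi> k a)) \<longlongrightarrow> t) U"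
      using tendsto_mono[OF U lim] .
  qed (use car ucp in auto)
  then show ?thesis
    by (rule tendsto_cong[THEN iffD1, rotated]) (use E in \<open>auto simp: \<psi>_def elim: eventually_mono\<close>)
qed

lemma AT_subset_AT_LFD:
  assumes FU: "free_ultrafilter U" and sep: "separable_alg TYPE('a)"
    and stable: "matrix_tracially_stable U sc st"
  shows "AT sc st \<subseteq> AT_LFD sc st"
proof
  fix \<tau> assume "\<tau> \<in> AT sc st"
  then obtain n \<phi> where tr: "tracial_state sc st \<tau>"
    and ucp: "\<And>k. 1 \<le> n k \<and> ucp sc st (n k) (\<phi> k)"
    and mult: "\<And>a b. (\<lambda>k. norm2_tr (\<phi> k (a * b) - \<phi> k a * \<phi> k b)) \<longlonglongrightarrow> 0"
    and lim: "\<And>a. (\<lambda>k. ntr (\<phi> k a)) \<longlonglongrightarrow> \<tau> a"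
    unfolding AT_def by blast
  have U: "U \<le> sequentially"
    using FU by (rule free_ultrafilter_le_sequentially)
  have "\<forall>k. 1 \<le> n k \<and> tracial_state_mat (n k) ntr"
    using ucp tracial_state_mat_ntr by blast
  moreover have "ustar_hom_ultra sc st U n (\<lambda>_. ntr) (\<lambda>a k. \<phi> k a)"
    using U ucp mult by (intro ustar_hom_ultra_if_asymptotically_multiplicative) auto
  ultimately have "approx_liftable sc st U n (\<lambda>_. ntr) (\<lambda>a k. \<phi> k a)"
    using stable unfolding matrix_tracially_stable_def
    by (elim allE[of _ n] allE[of _ "\<lambda>_. ntr"] allE[of _ "\<lambda>a k. \<phi> k a"]) blast
  then obtain E \<pi> where E: "eventually (\<lambda>k. k \<in> E) U" and hom: "\<And>k. k \<in> E \<Longrightarrow> ustar_hom sc st (n k) (\<pi> k)"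
    and lift: "\<And>a. ultra_null U (\<lambda>_. ntr) (\<lambda>k. \<phi> k a - (if k \<in> E then \<pi> k a else 0\<^sub>m (n k) (n k)))"
    unfolding approx_liftable_def by blast
  have \<pi>: "ucp sc st (n k) (\<pi> k)" if "k \<in> E" for k
    using hom[OF that] by (rule ucp_if_ustar_hom)
  have lim_U: "((\<lambda>k. ntr (\<pi> k a)) \<longlongrightarrow> \<tau> a) U" for a
    using U ucp lim E \<pi> lift by (rule tendsto_ntr_approximate_lift)
  have lip: "dist (ntr (\<pi> k a)) (ntr (\<pi> k b)) \<le> dist a b" if "k \<in> E" for k a b
    using ucp_map.dist_ntr_map_le[OF ucp_map_if_ucp[OF \<pi>[OF that]] conjunct1[OF ucp]] .
  have "U \<noteq> bot"
    using FU unfolding free_ultrafilter_def by blast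
  then obtain kk where kk: "\<And>j. kk j \<in> E" "\<And>a. (\<lambda>j. ntr (\<pi> (kk j) a)) \<longlonglongrightarrow> \<tau> a"
    using separable_diagonal_subsequence[OF sep _ E lim_U lip] by blast
  have "(\<lambda>j. infdist a (mult_domain (\<pi> (kk j)))) \<longlonglongrightarrow> 0" for a
    using mult_domain_ustar_hom[OF hom[OF kk(1)]] by simp
  then show "\<tau> \<in> AT_LFD sc st"
    unfolding AT_LFD_def using tr ucp kk \<pi>
    by (intro CollectI conjI exI[of _ "\<lambda>j. n (kk j)"] exI[of _ "\<lambda>j. \<pi> (kk j)"]) auto
qed

end

theorem theorem4p14:
  fixes U :: "nat filter"
    and sc :: "complex \<Rightarrow> 'a::{real_normed_algebra_1,banach} \<Rightarrow> 'a"
    and st :: "'a \<Rightarrow> 'a"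
  assumes "free_ultrafilter U"
    and "cstar_algebra sc st"
    and "separable_alg TYPE('a)"
    and "matrix_tracially_stable U sc st"
  shows "AT sc st = AT_LFD sc st"
proof -
  interpret cstar_alg sc st
    by (rule cstar_alg.intro) fact
  show ?thesis
    using AT_subset_AT_LFD[OF assms(1,3,4)] AT_LFD_subset_AT by (rule subset_antisym)
qed

end
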